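(* Let $A\in\mathbb{R}^{n\times d}_{\geq 0}$ and $b\in\mathbb{R}^n_{\geq 0}$ such that no column of $A$ is the $0$ vector and no entry of $b$ is equal to $0$. Assume that the (classical) system $Ax=b$, $x\in\mathbb{R}^d_{\geq 0}$ satisfies the dominance condition. Let $\tilde A\in\mathbb{T}^{n\times d}$ and $\tilde b\in\mathbb{T}^n$ be such that no column of $\tilde A$ is the $-\infty$ vector and no entry of $\tilde b$ is equal to $-\infty$. If, for each $j$, the minima $\min_i (b_i/A_{ij})$ and $\min_i(\tilde b_i-\tilde A_{ij})$ are reached by the same indices (with the convention $\lambda/0=+\infty$ for $\lambda>0$), then the feasible bases of the classical system are the same as the tropical bases of the tropical system $\tilde A\odot x=\tilde b$, $x\in\mathbb{T}^d$, and both systems are nondegenerate.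
   Context: $\mathbb{T}=\mathbb{R}\cup\{-\infty\}$ is the max-plus semifield ($\oplus=\max$, $\odot=+$). Classical: a basis of $Ax=b$, $x\geq 0$ is $B\subset[d]$ with $A_B$ (columns in $B$) square nonsingular; its basic solution is the unique solution with support in $B$; $B$ is feasible if this solution is nonnegative and nondegenerate if its support equals $B$. Tropical: a tropical (feasible) basis of $\tilde A\odot x=\tilde b$ is $B\subset[d]$, $|B|=n$, with a bijection $\phi:[n]\to B$ such that for each $i$, $\tilde b_i-\tilde A_{i\phi(i)}\in\mathbb{T}$ is minimal among $\tilde b_k-\tilde A_{k\phi(i)}$, $k\in[n]$ (with $-\infty-(-\infty)=+\infty$); it is nondegenerate if each such minimum is real and uniquely attained, and the system is nondegenerate if all its bases are (classically: all feasible bases nondegenerate). Dominance condition: the normalized matrix $(\operatorname{diag} b)^{-1}A(\operatorname{diag} u)^{-1}$, with $u_j$ the largest entry of column $j$ of $(\operatorname{diag} b)^{-1}A$, which has entries in $[0,1]$ and a $1$ in each column, satisfies (a) some $n\times n$ submatrix covers (entrywise dominates) a permutation matrix, and (b) every $n\times n$ submatrix covering a permutation matrix has all row sums less than $2$. *)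

theory Defs
  imports "Jordan_Normal_Form.Determinant" "HOL-Library.Extended_Real"
begin

text \<open>Conventions: an n x d matrix is a function nat => nat => _ used on rows {..<n}
  and columns {..<d} (0-based); vectors are nat => _ used on {..<n} resp. {..<d}.
  Tropical numbers (max-plus semifield R \<union> {-\<infinity>}) are represented as extended reals
  different from +\<infinity>.\<close>

definition submat_cols :: "nat \<Rightarrow> (nat \<Rightarrow> nat \<Rightarrow> real) \<Rightarrow> nat set \<Rightarrow> real mat" where
  "submat_cols n A B = mat n n (\<lambda>(i,k). A i (sorted_list_of_set B ! k))"

definition classical_basis :: "nat \<Rightarrow> nat \<Rightarrow> (nat \<Rightarrow> nat \<Rightarrow> real) \<Rightarrow> nat set \<Rightarrow> bool" where
  "classical_basis n d A B \<longleftrightarrow> B \<subseteq> {..<d} \<and> card B = n \<and> det (submat_cols n A B) \<noteq> 0"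

definition basic_solution ::
  "nat \<Rightarrow> nat \<Rightarrow> (nat \<Rightarrow> nat \<Rightarrow> real) \<Rightarrow> (nat \<Rightarrow> real) \<Rightarrow> nat set \<Rightarrow> nat \<Rightarrow> real" where
  "basic_solution n d A b B = (THE x. (\<forall>j. j \<notin> B \<longrightarrow> x j = 0) \<and>
                                    (\<forall>i<n. (\<Sum>j<d. A i j * x j) = b i))"

definition feasible_basis ::
  "nat \<Rightarrow> nat \<Rightarrow> (nat \<Rightarrow> nat \<Rightarrow> real) \<Rightarrow> (nat \<Rightarrow> real) \<Rightarrow> nat set \<Rightarrow> bool" where
  "feasible_basis n d A b B \<longleftrightarrow> classical_basis n d A B \<and>
     (\<forall>j<d. basic_solution n d A b B j \<ge> 0)"

definition nondegenerate_feasible_basis ::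
  "nat \<Rightarrow> nat \<Rightarrow> (nat \<Rightarrow> nat \<Rightarrow> real) \<Rightarrow> (nat \<Rightarrow> real) \<Rightarrow> nat set \<Rightarrow> bool" where
  "nondegenerate_feasible_basis n d A b B \<longleftrightarrow> feasible_basis n d A b B \<and>
     {j. basic_solution n d A b B j \<noteq> 0} = B"

definition classical_nondegenerate ::
  "nat \<Rightarrow> nat \<Rightarrow> (nat \<Rightarrow> nat \<Rightarrow> real) \<Rightarrow> (nat \<Rightarrow> real) \<Rightarrow> bool" where
  "classical_nondegenerate n d A b \<longleftrightarrow>
     (\<forall>B. feasible_basis n d A b B \<longrightarrow> nondegenerate_feasible_basis n d A b B)"

definition col_scale :: "nat \<Rightarrow> (nat \<Rightarrow> nat \<Rightarrow> real) \<Rightarrow> (nat \<Rightarrow> real) \<Rightarrow> nat \<Rightarrow> real" where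
  "col_scale n A b j = Max {A i j / b i | i. i < n}"

definition normalized_matrix :: "nat \<Rightarrow> (nat \<Rightarrow> nat \<Rightarrow> real) \<Rightarrow> (nat \<Rightarrow> real) \<Rightarrow> nat \<Rightarrow> nat \<Rightarrow> real" where
  "normalized_matrix n A b i j = (A i j / b i) / col_scale n A b j"

definition covers_perm :: "nat \<Rightarrow> (nat \<Rightarrow> nat \<Rightarrow> real) \<Rightarrow> nat set \<Rightarrow> bool" where
  "covers_perm n M S \<longleftrightarrow> (\<exists>\<sigma>. bij_betw \<sigma> {..<n} S \<and> (\<forall>i<n. M i (\<sigma> i) \<ge> 1))"

definition dominance_condition ::
  "nat \<Rightarrow> nat \<Rightarrow> (nat \<Rightarrow> nat \<Rightarrow> real) \<Rightarrow> (nat \<Rightarrow> real) \<Rightarrow> bool" where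
  "dominance_condition n d A b \<longleftrightarrow>
     (let M = normalized_matrix n A b in
       (\<exists>S. S \<subseteq> {..<d} \<and> card S = n \<and> covers_perm n M S) \<and>
       (\<forall>S. S \<subseteq> {..<d} \<and> card S = n \<and> covers_perm n M S \<longrightarrow>
            (\<forall>i<n. (\<Sum>j\<in>S. M i j) < 2)))"

definition classical_ratio :: "(nat \<Rightarrow> nat \<Rightarrow> real) \<Rightarrow> (nat \<Rightarrow> real) \<Rightarrow> nat \<Rightarrow> nat \<Rightarrow> ereal" where
  "classical_ratio A b i j = (if A i j = 0 then \<infinity> else ereal (b i / A i j))"

definition tdiff :: "ereal \<Rightarrow> ereal \<Rightarrow> ereal" where
  "tdiff x y = (if y = -\<infinity> then \<infinity> else x - y)"

definition tropical_basis ::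
  "nat \<Rightarrow> nat \<Rightarrow> (nat \<Rightarrow> nat \<Rightarrow> ereal) \<Rightarrow> (nat \<Rightarrow> ereal) \<Rightarrow> nat set \<Rightarrow> bool" where
  "tropical_basis n d At bt B \<longleftrightarrow> B \<subseteq> {..<d} \<and> card B = n \<and>
     (\<exists>\<phi>. bij_betw \<phi> {..<n} B \<and>
        (\<forall>i<n. \<forall>k<n. tdiff (bt i) (At i (\<phi> i)) \<le> tdiff (bt k) (At k (\<phi> i))))"

definition nondegenerate_tropical_basis ::
  "nat \<Rightarrow> nat \<Rightarrow> (nat \<Rightarrow> nat \<Rightarrow> ereal) \<Rightarrow> (nat \<Rightarrow> ereal) \<Rightarrow> nat set \<Rightarrow> bool" where
  "nondegenerate_tropical_basis n d At bt B \<longleftrightarrow> tropical_basis n d At bt B \<and>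
     (\<forall>j\<in>B. \<exists>i<n. tdiff (bt i) (At i j) \<noteq> \<infinity> \<and> tdiff (bt i) (At i j) \<noteq> -\<infinity> \<and>
        (\<forall>k<n. k \<noteq> i \<longrightarrow> tdiff (bt i) (At i j) < tdiff (bt k) (At k j)))"

definition tropical_nondegenerate ::
  "nat \<Rightarrow> nat \<Rightarrow> (nat \<Rightarrow> nat \<Rightarrow> ereal) \<Rightarrow> (nat \<Rightarrow> ereal) \<Rightarrow> bool" where
  "tropical_nondegenerate n d At bt \<longleftrightarrow>
     (\<forall>B. tropical_basis n d At bt B \<longrightarrow> nondegenerate_tropical_basis n d At bt B)"

definition argmin_rows :: "nat \<Rightarrow> (nat \<Rightarrow> ereal) \<Rightarrow> nat set" where
  "argmin_rows n f = {i. i < n \<and> (\<forall>k<n. f i \<le> f k)}"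

end

(*
  Dividing row i by b_i and column j by its largest ratio u_j = max_i A_ij / b_i turns
  A x = b into M y = 1 with y_j = u_j x_j, where M is the normalized matrix.  The entries
  of M lie in [0,1], and the 1s of column j sit exactly in the rows minimizing b_i / A_ij,
  hence by hypothesis in the rows minimizing b~_i - A~_ij.  The dominance condition makes
  this row unique (the pivot row of j), and both the feasible and the tropical bases turn
  out to be the column sets B on which the pivot map is a bijection onto the rows.  For
  such B every row of M_B consists of its pivot 1 and entries summing to less than 1, so
  M_B is strictly diagonally dominant: it is nonsingular and the solution of M_B y = 1 is
  positive, which makes B a nondegenerate feasible basis.
*)

theory Submission
  imports Defs
begin

section \<open>Basic solutions\<close>

lemma sum_lessThan_eq_sum_support:
  fixes x :: "nat \<Rightarrow> 'a::semiring_0"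
  assumes "B \<subseteq> {..<d}" and "\<forall>j. j \<notin> B \<longrightarrow> x j = 0"
  shows "(\<Sum>j<d. f j * x j) = (\<Sum>j\<in>B. f j * x j)"
  using assms by (intro sum.mono_neutral_right) auto

lemma bij_betw_sorted_nth:
  assumes "finite B" and "card B = n"
  shows "bij_betw (\<lambda>k. sorted_list_of_set B ! k) {..<n} B"
  by (rule bij_betw_nth) (use assms in auto)

lemma submat_cols_mult_vec:
  assumes "finite B" and "card B = n"
  shows "submat_cols n A B *\<^sub>v vec n (\<lambda>k. x (sorted_list_of_set B ! k))
       = vec n (\<lambda>i. \<Sum>j\<in>B. A i j * x j)"
proof (rule eq_vecI)
  fix i assume "i < dim_vec (vec n (\<lambda>i. \<Sum>j\<in>B. A i j * x j))"
  then have "i < n" by simp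
  then have "(submat_cols n A B *\<^sub>v vec n (\<lambda>k. x (sorted_list_of_set B ! k))) $ i
      = (\<Sum>k<n. A i (sorted_list_of_set B ! k) * x (sorted_list_of_set B ! k))"
    by (simp add: submat_cols_def mult_mat_vec_def scalar_prod_def lessThan_atLeast0)
  also have "\<dots> = (\<Sum>j\<in>B. A i j * x j)"
    by (rule sum.reindex_bij_betw[OF bij_betw_sorted_nth[OF assms]])
  finally show "(submat_cols n A B *\<^sub>v vec n (\<lambda>k. x (sorted_list_of_set B ! k))) $ i
      = vec n (\<lambda>i. \<Sum>j\<in>B. A i j * x j) $ i"
    using \<open>i < n\<close> by simp
qed (simp add: submat_cols_def)

lemma vec_sorted_nth_eq_0_iff:
  assumes "finite B" and "card B = n"
  shows "vec n (\<lambda>k. x (sorted_list_of_set B ! k)) = 0\<^sub>v n \<longleftrightarrow> (\<forall>j\<in>B. x j = 0)"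
proof -
  have "B = (\<lambda>k. sorted_list_of_set B ! k) ` {..<n}"
    using bij_betw_sorted_nth[OF assms] by (simp add: bij_betw_def)
  then show ?thesis by (auto simp: vec_eq_iff) (metis imageE lessThan_iff)
qed

lemma vec_eq_vec_sorted_nth:
  assumes "finite B" and "card B = n" and "v \<in> carrier_vec n"
  obtains x where "\<forall>j. j \<notin> B \<longrightarrow> x j = 0" and "v = vec n (\<lambda>k. x (sorted_list_of_set B ! k))"
proof
  let ?e = "\<lambda>k. sorted_list_of_set B ! k"
  have bij: "bij_betw ?e {..<n} B" by (rule bij_betw_sorted_nth[OF assms(1,2)])
  show "\<forall>j. j \<notin> B \<longrightarrow> (if j \<in> B then v $ the_inv_into {..<n} ?e j else 0) = 0" by simp
  show "v = vec n (\<lambda>k. (\<lambda>j. if j \<in> B then v $ the_inv_into {..<n} ?e j else 0) (?e k))"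
    using assms(3) bij bij_betw_apply[OF bij] the_inv_into_f_f[OF bij_betw_imp_inj_on[OF bij]]
    by (intro eq_vecI) auto
qed

lemma det_submat_cols_nonzero_iff:
  assumes fin: "finite B" and card: "card B = n"
  shows "det (submat_cols n A B) \<noteq> 0 \<longleftrightarrow>
    (\<forall>z. (\<forall>j. j \<notin> B \<longrightarrow> z j = 0) \<longrightarrow> (\<forall>i<n. (\<Sum>j\<in>B. A i j * z j) = 0) \<longrightarrow> (\<forall>j\<in>B. z j = 0))"
    (is "_ \<longleftrightarrow> ?kernel_trivial")
proof -
  let ?Q = "submat_cols n A B" and ?v = "\<lambda>z. vec n (\<lambda>k. z (sorted_list_of_set B ! k))"
  have Q: "?Q \<in> carrier_mat n n" by (simp add: submat_cols_def)
  have mult: "?Q *\<^sub>v ?v z = 0\<^sub>v n \<longleftrightarrow> (\<forall>i<n. (\<Sum>j\<in>B. A i j * z j) = 0)" for z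
    by (auto simp: submat_cols_mult_vec[OF fin card] vec_eq_iff)
  show ?thesis
  proof
    assume "det ?Q \<noteq> 0"
    then show ?kernel_trivial
      using det_0_iff_vec_prod_zero_field[OF Q] mult vec_sorted_nth_eq_0_iff[OF fin card]
      by (metis vec_carrier)
  next
    assume ?kernel_trivial
    show "det ?Q \<noteq> 0"
    proof
      assume "det ?Q = 0"
      then obtain v where v: "v \<in> carrier_vec n" "v \<noteq> 0\<^sub>v n" "?Q *\<^sub>v v = 0\<^sub>v n"
        using det_0_iff_vec_prod_zero_field[OF Q] by blast
      obtain z where "\<forall>j. j \<notin> B \<longrightarrow> z j = 0" and "v = ?v z"
        using vec_eq_vec_sorted_nth[OF fin card v(1)] .
      with v \<open>?kernel_trivial\<close> show False
        using mult vec_sorted_nth_eq_0_iff[OF fin card] by metis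
    qed
  qed
qed

lemma submat_cols_solvable:
  assumes fin: "finite B" and card: "card B = n" and det: "det (submat_cols n A B) \<noteq> 0"
  obtains x where "\<forall>j. j \<notin> B \<longrightarrow> x j = 0" and "\<forall>i<n. (\<Sum>j\<in>B. A i j * x j) = c i"
proof -
  let ?Q = "submat_cols n A B"
  have Q: "?Q \<in> carrier_mat n n" by (simp add: submat_cols_def)
  obtain R where R: "R \<in> carrier_mat n n" "?Q * R = 1\<^sub>m n"
    using det_non_zero_imp_unit[OF Q det, of "()"] unfolding Units_def ring_mat_def by auto
  have "R *\<^sub>v vec n c \<in> carrier_vec n" using R by simp
  then obtain x where x: "\<forall>j. j \<notin> B \<longrightarrow> x j = 0"
      and v: "R *\<^sub>v vec n c = vec n (\<lambda>k. x (sorted_list_of_set B ! k))"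
    using vec_eq_vec_sorted_nth[OF fin card] by blast
  have "vec n (\<lambda>i. \<Sum>j\<in>B. A i j * x j) = ?Q *\<^sub>v (R *\<^sub>v vec n c)"
    by (simp add: v submat_cols_mult_vec[OF fin card])
  also have "\<dots> = vec n c"
    using R Q by (simp add: assoc_mult_mat_vec[symmetric, of _ n n _ n])
  finally show ?thesis
    using that[OF x] by (metis index_vec)
qed

lemma basic_solution_spec:
  assumes "classical_basis n d A B"
  shows "\<forall>j. j \<notin> B \<longrightarrow> basic_solution n d A b B j = 0"
    and "\<forall>i<n. (\<Sum>j<d. A i j * basic_solution n d A b B j) = b i"
proof -
  have B: "B \<subseteq> {..<d}" "card B = n" and det: "det (submat_cols n A B) \<noteq> 0"
    using assms by (auto simp: classical_basis_def)
  have fin: "finite B" using B(1) finite_subset[OF _ finite_lessThan] by blast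
  let ?solves = "\<lambda>x. (\<forall>j. j \<notin> B \<longrightarrow> x j = 0) \<and> (\<forall>i<n. (\<Sum>j<d. A i j * x j) = b i)"
  obtain x where x: "\<forall>j. j \<notin> B \<longrightarrow> x j = 0" "\<forall>i<n. (\<Sum>j\<in>B. A i j * x j) = b i"
    using submat_cols_solvable[OF fin B(2) det] by blast
  have "?solves x" using x sum_lessThan_eq_sum_support[OF B(1) x(1)] by simp
  moreover have "y = x" if "?solves y" for y
  proof -
    have "\<forall>i<n. (\<Sum>j\<in>B. A i j * (y j - x j)) = 0"
      using that x sum_lessThan_eq_sum_support[OF B(1), of y]
      by (simp add: right_diff_distrib sum_subtractf)
    moreover have "\<forall>j. j \<notin> B \<longrightarrow> y j - x j = 0" using that x by simp
    ultimately have "\<forall>j\<in>B. y j - x j = 0"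
      using det det_submat_cols_nonzero_iff[OF fin B(2), of A]
      by (auto elim!: allE[of _ "\<lambda>j. y j - x j"])
    then show "y = x" using that x by (metis eq_iff_diff_eq_0 ext)
  qed
  ultimately have "?solves (basic_solution n d A b B)"
    unfolding basic_solution_def by (rule theI)
  then show "\<forall>j. j \<notin> B \<longrightarrow> basic_solution n d A b B j = 0"
    and "\<forall>i<n. (\<Sum>j<d. A i j * basic_solution n d A b B j) = b i" by auto
qed

section \<open>Strictly diagonally dominant systems\<close>

lemma finite_obtain_arg_max:
  fixes f :: "'a \<Rightarrow> 'b::linorder"
  assumes "finite S" and "S \<noteq> {}"
  obtains x where "x \<in> S" and "\<And>y. y \<in> S \<Longrightarrow> f y \<le> f x"
proof -
  have "Max (f ` S) \<in> f ` S" using assms by simp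
  then obtain x where "x \<in> S" "f x = Max (f ` S)" by auto
  with assms that show ?thesis by simp
qed

lemma finite_obtain_arg_min:
  fixes f :: "'a \<Rightarrow> 'b::linorder"
  assumes "finite S" and "S \<noteq> {}"
  obtains x where "x \<in> S" and "\<And>y. y \<in> S \<Longrightarrow> f x \<le> f y"
proof -
  have "Min (f ` S) \<in> f ` S" using assms by simp
  then obtain x where "x \<in> S" "f x = Min (f ` S)" by auto
  with assms that show ?thesis by simp
qed

lemma diagonally_dominant_kernel_trivial:
  fixes a :: "'a \<Rightarrow> 'a \<Rightarrow> real"
  assumes fin: "finite S"
    and dominant: "\<And>j. j \<in> S \<Longrightarrow> (\<Sum>l\<in>S-{j}. \<bar>a j l\<bar>) < \<bar>a j j\<bar>"
    and kernel: "\<And>j. j \<in> S \<Longrightarrow> (\<Sum>l\<in>S. a j l * z l) = 0"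
    and j: "j \<in> S"
  shows "z j = 0"
proof -
  obtain m where m: "m \<in> S" and max: "\<And>l. l \<in> S \<Longrightarrow> \<bar>z l\<bar> \<le> \<bar>z m\<bar>"
    using finite_obtain_arg_max[OF fin, where f="\<lambda>l. \<bar>z l\<bar>"] j by blast
  let ?\<rho> = "\<Sum>l\<in>S-{m}. \<bar>a m l\<bar>"
  have "a m m * z m = - (\<Sum>l\<in>S-{m}. a m l * z l)"
    using kernel[OF m] fin m by (simp add: sum.remove)
  then have "\<bar>a m m\<bar> * \<bar>z m\<bar> = \<bar>\<Sum>l\<in>S-{m}. a m l * z l\<bar>"
    by (metis abs_minus_cancel abs_mult)
  also have "\<dots> \<le> (\<Sum>l\<in>S-{m}. \<bar>a m l\<bar> * \<bar>z l\<bar>)"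
    unfolding abs_mult[symmetric] by (rule sum_abs)
  also have "\<dots> \<le> ?\<rho> * \<bar>z m\<bar>"
    unfolding sum_distrib_right by (intro sum_mono mult_left_mono max) auto
  finally have "(\<bar>a m m\<bar> - ?\<rho>) * \<bar>z m\<bar> \<le> 0"
    by (simp add: algebra_simps)
  then have "\<bar>z m\<bar> = 0"
    using dominant[OF m] by (simp add: mult_le_0_iff)
  then show ?thesis using max[OF j] by simp
qed

lemma diagonally_dominant_solution_pos:
  fixes a :: "'a \<Rightarrow> 'a \<Rightarrow> real"
  assumes fin: "finite S"
    and diag: "\<And>j. j \<in> S \<Longrightarrow> a j j = 1"
    and nonneg: "\<And>j l. j \<in> S \<Longrightarrow> l \<in> S \<Longrightarrow> 0 \<le> a j l"
    and dominant: "\<And>j. j \<in> S \<Longrightarrow> (\<Sum>l\<in>S-{j}. a j l) < 1"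
    and solves: "\<And>j. j \<in> S \<Longrightarrow> (\<Sum>l\<in>S. a j l * y l) = 1"
    and j: "j \<in> S"
  shows "0 < y j"
proof (rule ccontr)
  assume "\<not> 0 < y j"
  obtain m where m: "m \<in> S" and min: "\<And>l. l \<in> S \<Longrightarrow> y m \<le> y l"
    using finite_obtain_arg_min[OF fin, where f=y] j by blast
  obtain M where M: "M \<in> S" and max: "\<And>l. l \<in> S \<Longrightarrow> y l \<le> y M"
    using finite_obtain_arg_max[OF fin, where f=y] j by blast
  have "y m \<le> 0" using \<open>\<not> 0 < y j\<close> min[OF j] by simp
  let ?\<rho> = "\<lambda>j. \<Sum>l\<in>S-{j}. a j l"
  have row: "1 = y j + (\<Sum>l\<in>S-{j}. a j l * y l)" if "j \<in> S" for j
    using solves[OF that] fin that diag[OF that] by (simp add: sum.remove)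
  have "?\<rho> M * y m \<le> (\<Sum>l\<in>S-{M}. a M l * y l)"
    unfolding sum_distrib_right using M by (intro sum_mono mult_left_mono min nonneg) auto
  moreover have "(1 - ?\<rho> M) * y m \<le> 0"
    using dominant[OF M] \<open>y m \<le> 0\<close> by (simp add: mult_nonneg_nonpos)
  ultimately have "y M \<le> 1 - y m" using row[OF M] by (simp add: algebra_simps)
  have "(\<Sum>l\<in>S-{m}. a m l * y l) \<le> ?\<rho> m * y M"
    unfolding sum_distrib_right using m by (intro sum_mono mult_left_mono max nonneg) auto
  also have "\<dots> \<le> ?\<rho> m * (1 - y m)"
    using \<open>y M \<le> 1 - y m\<close> m nonneg by (intro mult_left_mono sum_nonneg) auto
  finally have "(1 - ?\<rho> m) * (1 - y m) \<le> 0"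
    using row[OF m] by (simp add: algebra_simps)
  moreover have "0 < (1 - ?\<rho> m) * (1 - y m)"
    using dominant[OF m] \<open>y m \<le> 0\<close> by simp
  ultimately show False by simp
qed

section \<open>Pivot rows under the dominance condition\<close>

lemma bij_betw_iff_inverse_bij_betw:
  "bij_betw r S I \<longleftrightarrow> (\<exists>\<phi>. bij_betw \<phi> I S \<and> (\<forall>i\<in>I. r (\<phi> i) = i))"
proof
  assume "bij_betw r S I"
  then show "\<exists>\<phi>. bij_betw \<phi> I S \<and> (\<forall>i\<in>I. r (\<phi> i) = i)"
    by (metis bij_betw_the_inv_into f_the_inv_into_f_bij_betw)
next
  assume "\<exists>\<phi>. bij_betw \<phi> I S \<and> (\<forall>i\<in>I. r (\<phi> i) = i)"
  then obtain \<phi> where \<phi>: "bij_betw \<phi> I S" "\<forall>i\<in>I. r (\<phi> i) = i" by blast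
  have "r s = inv_into I \<phi> s" if "s \<in> S" for s
    using that \<phi> bij_betw_imp_inj_on[OF \<phi>(1)] bij_betw_imp_surj_on[OF \<phi>(1)] by auto
  then show "bij_betw r S I"
    using bij_betw_cong bij_betw_inv_into[OF \<phi>(1)] by blast
qed

lemma covers_perm_card: "covers_perm n M S \<Longrightarrow> card S = n"
  unfolding covers_perm_def by (auto dest: bij_betw_same_card)

locale dominant_matrix =
  fixes n d :: nat and M :: "nat \<Rightarrow> nat \<Rightarrow> real"
  assumes M_nonneg: "\<And>i j. i < n \<Longrightarrow> j < d \<Longrightarrow> 0 \<le> M i j"
    and column_has_1: "\<And>j. j < d \<Longrightarrow> \<exists>i<n. M i j = 1"
    and covering_exists: "\<exists>S \<subseteq> {..<d}. covers_perm n M S"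
    and covering_row_sum_lt_2:
      "\<And>S i. S \<subseteq> {..<d} \<Longrightarrow> covers_perm n M S \<Longrightarrow> i < n \<Longrightarrow> (\<Sum>j\<in>S. M i j) < 2"
begin

lemma covered_row_unique_1:
  assumes S: "S \<subseteq> {..<d}" "covers_perm n M S" and i: "i < n"
    and a: "a \<in> S" "1 \<le> M i a" and c: "c \<in> S" "1 \<le> M i c"
  shows "a = c"
proof (rule ccontr)
  assume "a \<noteq> c"
  then have "M i a + M i c = (\<Sum>j\<in>{a, c}. M i j)" by simp
  also have "\<dots> \<le> (\<Sum>j\<in>S. M i j)"
    using S i a c finite_subset[OF S(1) finite_lessThan] by (intro sum_mono2 M_nonneg) auto
  also have "\<dots> < 2" by (rule covering_row_sum_lt_2[OF S i])
  finally show False using a c by simp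
qed

lemma covers_perm_exchange:
  assumes \<sigma>: "bij_betw \<sigma> {..<n} S" "\<forall>i<n. 1 \<le> M i (\<sigma> i)"
    and j: "j \<notin> S" and k: "k < n" "1 \<le> M k j"
  shows "covers_perm n M (insert j (S - {\<sigma> k}))"
  unfolding covers_perm_def
proof (intro exI conjI allI impI)
  have inj: "inj_on \<sigma> {..<n}" and im: "\<sigma> ` {..<n} = S"
    using \<sigma>(1) by (auto simp: bij_betw_def)
  have "(\<sigma>(k := j)) ` {..<n} = insert j (\<sigma> ` ({..<n} - {k}))"
    using k by (auto simp: fun_upd_image)
  also have "\<dots> = insert j (S - {\<sigma> k})"
    using inj im k by (simp add: inj_on_image_set_diff)
  finally show "bij_betw (\<sigma>(k := j)) {..<n} (insert j (S - {\<sigma> k}))"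
    using inj j im by (simp add: bij_betw_def inj_on_fun_updI)
  show "1 \<le> M i ((\<sigma>(k := j)) i)" if "i < n" for i
    using \<sigma>(2) k that by simp
qed

lemma column_unique_1:
  assumes j: "j < d" and i: "i < n" "1 \<le> M i j" and k: "k < n" "1 \<le> M k j"
  shows "i = k"
  \<comment> \<open>If \<open>j\<close> belongs to a covering, the row among \<open>i, k\<close> not covered at \<open>j\<close>
    has two 1s in it; otherwise exchanging \<open>j\<close> into the covering at row \<open>k\<close>
    gives row \<open>i\<close> two 1s.\<close>
proof -
  obtain S \<sigma> where S: "S \<subseteq> {..<d}" and \<sigma>: "bij_betw \<sigma> {..<n} S" "\<forall>i<n. 1 \<le> M i (\<sigma> i)"
    using covering_exists unfolding covers_perm_def by blast
  then have cov: "covers_perm n M S" unfolding covers_perm_def by blast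
  have \<sigma>_in: "\<sigma> l \<in> S" if "l < n" for l using bij_betw_apply[OF \<sigma>(1)] that by simp
  show ?thesis
  proof (cases "j \<in> S")
    case True
    then have "\<sigma> i = \<sigma> k"
      using covered_row_unique_1[OF S cov] \<sigma>_in \<sigma>(2) i k by metis
    then show ?thesis using bij_betw_imp_inj_on[OF \<sigma>(1)] i k by (auto dest: inj_onD)
  next
    case False
    let ?S' = "insert j (S - {\<sigma> k})"
    have S': "?S' \<subseteq> {..<d}" "covers_perm n M ?S'"
      using S j covers_perm_exchange[OF \<sigma> False k] by auto
    show "i = k"
    proof (rule ccontr)
      assume "i \<noteq> k"
      then have "\<sigma> i \<in> ?S'"
        using \<sigma>_in i k bij_betw_imp_inj_on[OF \<sigma>(1)] by (auto dest: inj_onD)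
      then have "\<sigma> i = j" using covered_row_unique_1[OF S' i(1)] \<sigma>(2) i by blast
      then show False using False \<sigma>_in i by blast
    qed
  qed
qed

definition pivot_row :: "nat \<Rightarrow> nat" where
  "pivot_row j = (THE i. i < n \<and> M i j = 1)"

lemma pivot_row:
  assumes "j < d"
  shows "pivot_row j < n" and "M (pivot_row j) j = 1"
proof -
  obtain i where i: "i < n" "M i j = 1" using column_has_1[OF assms] by blast
  have "pivot_row j = i"
    unfolding pivot_row_def
  proof (rule the_equality)
    show "\<And>k. k < n \<and> M k j = 1 \<Longrightarrow> k = i"
      using column_unique_1[OF assms _ _ i(1)] i(2) by simp
  qed (use i in simp)
  then show "pivot_row j < n" and "M (pivot_row j) j = 1" using i by simp_all
qed

lemma ge_1_iff_pivot_row: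
  assumes "i < n" and "j < d"
  shows "1 \<le> M i j \<longleftrightarrow> i = pivot_row j"
proof
  assume "1 \<le> M i j"
  then show "i = pivot_row j"
    using column_unique_1[OF assms(2,1) _ pivot_row(1)[OF assms(2)]] pivot_row(2)[OF assms(2)]
    by simp
qed (use pivot_row(2)[OF assms(2)] in simp)

lemma pivot_row_surj:
  assumes "k < n"
  shows "\<exists>j<d. pivot_row j = k"
proof -
  obtain S \<sigma> where "S \<subseteq> {..<d}" "bij_betw \<sigma> {..<n} S" "\<forall>i<n. 1 \<le> M i (\<sigma> i)"
    using covering_exists unfolding covers_perm_def by blast
  then have "\<sigma> k < d" and "1 \<le> M k (\<sigma> k)"
    using assms bij_betw_apply[of \<sigma> "{..<n}" S k] by auto
  then have "pivot_row (\<sigma> k) = k" using ge_1_iff_pivot_row[OF assms] by simp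
  with \<open>\<sigma> k < d\<close> show ?thesis by blast
qed

lemma covers_perm_iff_bij_pivot_row:
  assumes "S \<subseteq> {..<d}"
  shows "covers_perm n M S \<longleftrightarrow> bij_betw pivot_row S {..<n}"
proof -
  have "bij_betw \<sigma> {..<n} S \<and> (\<forall>i<n. 1 \<le> M i (\<sigma> i)) \<longleftrightarrow>
      bij_betw \<sigma> {..<n} S \<and> (\<forall>i\<in>{..<n}. pivot_row (\<sigma> i) = i)" for \<sigma>
  proof -
    have "\<sigma> i < d" if "bij_betw \<sigma> {..<n} S" "i < n" for i
      using bij_betw_apply[OF that(1)] assms that(2) by auto
    then show ?thesis using ge_1_iff_pivot_row by auto
  qed
  then show ?thesis
    unfolding covers_perm_def bij_betw_iff_inverse_bij_betw[of pivot_row] by (rule ex_cong1)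
qed

lemma row_sum_lt_2:
  assumes "S \<subseteq> {..<d}" and "bij_betw pivot_row S {..<n}" and "i < n"
  shows "(\<Sum>j\<in>S. M i j) < 2"
  using covering_row_sum_lt_2[OF assms(1) _ assms(3)] covers_perm_iff_bij_pivot_row[OF assms(1)] assms(2)
  by simp

lemma pivot_dominates_row:
  assumes S: "S \<subseteq> {..<d}" "bij_betw pivot_row S {..<n}" and j: "j \<in> S"
  shows "M (pivot_row j) j = 1" and "(\<Sum>l\<in>S-{j}. M (pivot_row j) l) < 1"
proof -
  have "j < d" using S j by auto
  then show "M (pivot_row j) j = 1" by (rule pivot_row)
  moreover have "(\<Sum>l\<in>S. M (pivot_row j) l) = M (pivot_row j) j + (\<Sum>l\<in>S-{j}. M (pivot_row j) l)"
    using j finite_subset[OF S(1) finite_lessThan] by (rule sum.remove[rotated])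
  ultimately show "(\<Sum>l\<in>S-{j}. M (pivot_row j) l) < 1"
    using row_sum_lt_2[OF S pivot_row(1)[OF \<open>j < d\<close>]] by simp
qed

lemma bij_pivot_row_kernel_trivial:
  assumes S: "S \<subseteq> {..<d}" "bij_betw pivot_row S {..<n}"
    and z: "\<forall>i<n. (\<Sum>j\<in>S. M i j * z j) = 0" and j: "j \<in> S"
  shows "z j = 0"
proof (rule diagonally_dominant_kernel_trivial[where a = "\<lambda>j. M (pivot_row j)"])
  show "finite S" using S(1) finite_subset[OF _ finite_lessThan] by blast
  show "j \<in> S" by (rule j)
next
  fix l assume l: "l \<in> S"
  then have "pivot_row l < n" using S pivot_row(1) by blast
  then show "(\<Sum>j\<in>S. M (pivot_row l) j * z j) = 0" using z by simp
  have "(\<Sum>m\<in>S-{l}. \<bar>M (pivot_row l) m\<bar>) = (\<Sum>m\<in>S-{l}. M (pivot_row l) m)"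
    using S \<open>pivot_row l < n\<close> by (intro sum.cong refl abs_of_nonneg M_nonneg) auto
  then show "(\<Sum>m\<in>S-{l}. \<bar>M (pivot_row l) m\<bar>) < \<bar>M (pivot_row l) l\<bar>"
    using pivot_dominates_row[OF S l] by simp
qed

lemma bij_pivot_row_solution_pos:
  assumes S: "S \<subseteq> {..<d}" "bij_betw pivot_row S {..<n}"
    and y: "\<forall>i<n. (\<Sum>j\<in>S. M i j * y j) = 1" and j: "j \<in> S"
  shows "0 < y j"
proof (rule diagonally_dominant_solution_pos[where a = "\<lambda>j. M (pivot_row j)"])
  show "finite S" using S(1) finite_subset[OF _ finite_lessThan] by blast
  show "j \<in> S" by (rule j)
next
  fix l assume l: "l \<in> S"
  then have "pivot_row l < n" using S pivot_row(1) by blast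
  then show "(\<Sum>m\<in>S. M (pivot_row l) m * y m) = 1" using y by simp
  show "\<And>m. m \<in> S \<Longrightarrow> 0 \<le> M (pivot_row l) m"
    using S \<open>pivot_row l < n\<close> by (auto intro: M_nonneg)
  show "M (pivot_row l) l = 1" and "(\<Sum>m\<in>S-{l}. M (pivot_row l) m) < 1"
    using pivot_dominates_row[OF S l] by simp_all
qed

lemma pivot_fiber_sum_le_1:
  assumes S: "S \<subseteq> {..<d}" and y: "\<forall>j\<in>S. 0 \<le> y j" "\<forall>i<n. (\<Sum>j\<in>S. M i j * y j) = 1"
    and k: "k < n"
  shows "(\<Sum>j\<in>{j\<in>S. pivot_row j = k}. y j) \<le> 1"
proof -
  have "(\<Sum>j\<in>{j\<in>S. pivot_row j = k}. y j) = (\<Sum>j\<in>{j\<in>S. pivot_row j = k}. M k j * y j)"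
  proof (rule sum.cong)
    fix j assume "j \<in> {j\<in>S. pivot_row j = k}"
    then have "j < d" and "pivot_row j = k" using S by auto
    then show "y j = M k j * y j" using pivot_row(2)[of j] by simp
  qed simp
  also have "\<dots> \<le> (\<Sum>j\<in>S. M k j * y j)"
    using S y k finite_subset[OF S(1) finite_lessThan]
    by (intro sum_mono2) (auto intro!: mult_nonneg_nonneg M_nonneg)
  finally show ?thesis using y k by simp
qed

lemma transversal_off_row_sum_lt_1:
  assumes g: "\<forall>k<n. g k < d \<and> pivot_row (g k) = k" and i: "i < n"
  shows "(\<Sum>k\<in>{..<n}-{i}. M i (g k)) < 1"
proof -
  have inj: "inj_on g {..<n}"
  proof (rule inj_onI)
    fix k l assume "k \<in> {..<n}" "l \<in> {..<n}" "g k = g l"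
    have "k = pivot_row (g k)" using g \<open>k \<in> {..<n}\<close> by simp
    also have "\<dots> = pivot_row (g l)" using \<open>g k = g l\<close> by simp
    also have "\<dots> = l" using g \<open>l \<in> {..<n}\<close> by simp
    finally show "k = l" .
  qed
  have sub: "g ` {..<n} \<subseteq> {..<d}" using g by auto
  have "bij_betw pivot_row (g ` {..<n}) {..<n}"
    unfolding bij_betw_iff_inverse_bij_betw[of pivot_row]
  proof (intro exI conjI)
    show "bij_betw g {..<n} (g ` {..<n})" using inj by (rule inj_on_imp_bij_betw)
    show "\<forall>k\<in>{..<n}. pivot_row (g k) = k" using g by simp
  qed
  then have "(\<Sum>j\<in>g ` {..<n}. M i j) < 2" by (rule row_sum_lt_2[OF sub _ i])
  then have "(\<Sum>k<n. M i (g k)) < 2" by (simp only: sum.reindex[OF inj] comp_def)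
  moreover have "(\<Sum>k<n. M i (g k)) = M i (g i) + (\<Sum>k\<in>{..<n}-{i}. M i (g k))"
    using i by (intro sum.remove) simp_all
  moreover have "M i (g i) = 1" using g i pivot_row(2)[of "g i"] by simp
  ultimately show ?thesis by simp
qed

lemma obtain_heaviest_transversal:
  assumes S: "S \<subseteq> {..<d}"
  obtains g where "\<forall>k<n. g k < d \<and> pivot_row (g k) = k"
    and "\<forall>k<n. \<forall>j\<in>S. pivot_row j = k \<longrightarrow> M i j \<le> M i (g k)"
proof -
  have fin: "finite S" using S finite_subset[OF _ finite_lessThan] by blast
  have "\<forall>k\<in>{..<n}. \<exists>c. c < d \<and> pivot_row c = k \<and> (\<forall>j\<in>S. pivot_row j = k \<longrightarrow> M i j \<le> M i c)"
  proof
    fix k assume "k \<in> {..<n}"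
    then have "k < n" by simp
    show "\<exists>c. c < d \<and> pivot_row c = k \<and> (\<forall>j\<in>S. pivot_row j = k \<longrightarrow> M i j \<le> M i c)"
    proof (cases "k \<in> pivot_row ` S")
      case True
      then obtain c where "c \<in> {j\<in>S. pivot_row j = k}"
          "\<And>j. j \<in> {j\<in>S. pivot_row j = k} \<Longrightarrow> M i j \<le> M i c"
        using finite_obtain_arg_max[of "{j\<in>S. pivot_row j = k}" "M i"] fin by auto
      then show ?thesis using S by auto
    next
      case False
      obtain c where "c < d" "pivot_row c = k" using pivot_row_surj[OF \<open>k < n\<close>] by blast
      moreover have "\<forall>j\<in>S. pivot_row j \<noteq> k" using False by blast
      ultimately show ?thesis by (intro exI[of _ c]) simp
    qed
  qed
  from bchoice[OF this] obtain g where "\<forall>k\<in>{..<n}. g k < d \<and> pivot_row (g k) = k \<and>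
      (\<forall>j\<in>S. pivot_row j = k \<longrightarrow> M i j \<le> M i (g k))"
    by blast
  then have "\<forall>k<n. g k < d \<and> pivot_row (g k) = k"
    and "\<forall>k<n. \<forall>j\<in>S. pivot_row j = k \<longrightarrow> M i j \<le> M i (g k)"
    by auto
  then show ?thesis by (rule that)
qed

text \<open>A row missed by the pivots of \<open>S\<close> would be covered by a transversal through the
  heaviest column of each pivot fibre, and its equation would then sum to less than 1.\<close>

lemma bij_pivot_row_if_nonneg_solution:
  assumes S: "S \<subseteq> {..<d}" "card S = n"
    and y: "\<forall>j\<in>S. 0 \<le> y j" "\<forall>i<n. (\<Sum>j\<in>S. M i j * y j) = 1"
  shows "bij_betw pivot_row S {..<n}"
proof (rule ccontr)
  assume not_bij: "\<not> bij_betw pivot_row S {..<n}"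
  have fin: "finite S" using S(1) finite_subset[OF _ finite_lessThan] by blast
  have pivots: "pivot_row ` S \<subseteq> {..<n}" using S(1) pivot_row(1) by auto
  moreover have "pivot_row ` S \<noteq> {..<n}"
  proof
    assume image: "pivot_row ` S = {..<n}"
    then have "inj_on pivot_row S" using eq_card_imp_inj_on[OF fin, of pivot_row] S(2) by simp
    with image not_bij show False by (simp add: bij_betw_def)
  qed
  ultimately obtain i where i: "i < n" "i \<notin> pivot_row ` S" by blast
  obtain g where g: "\<forall>k<n. g k < d \<and> pivot_row (g k) = k"
    and g_max: "\<forall>k<n. \<forall>j\<in>S. pivot_row j = k \<longrightarrow> M i j \<le> M i (g k)"
    by (rule obtain_heaviest_transversal[OF S(1), where i = i])
  have M_g_nonneg: "0 \<le> M i (g k)" if "k < n" for k using g i M_nonneg that by simp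
  have "1 = (\<Sum>j\<in>S. M i j * y j)" using y i by simp
  also have "\<dots> = (\<Sum>k\<in>pivot_row ` S. \<Sum>j\<in>{j\<in>S. pivot_row j = k}. M i j * y j)"
    using fin by (rule sum.image_gen)
  also have "\<dots> \<le> (\<Sum>k\<in>pivot_row ` S. M i (g k) * (\<Sum>j\<in>{j\<in>S. pivot_row j = k}. y j))"
    unfolding sum_distrib_left using g_max y(1) S(1) pivot_row(1)
    by (intro sum_mono mult_right_mono) auto
  also have "\<dots> \<le> (\<Sum>k\<in>pivot_row ` S. M i (g k))"
    using pivot_fiber_sum_le_1[OF S(1) y] M_g_nonneg pivots
    by (intro sum_mono mult_left_le) auto
  also have "\<dots> \<le> (\<Sum>k\<in>{..<n}-{i}. M i (g k))"
    using pivots i M_g_nonneg by (intro sum_mono2) auto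
  also have "\<dots> < 1" by (rule transversal_off_row_sum_lt_1[OF g i(1)])
  finally show False by simp
qed

end

section \<open>Tropical bases\<close>

lemma mem_argmin_rows: "i \<in> argmin_rows n f \<longleftrightarrow> i < n \<and> (\<forall>k<n. f i \<le> f k)"
  by (simp add: argmin_rows_def)

lemma tdiff_neq_MInfty: "x \<noteq> -\<infinity> \<Longrightarrow> y \<noteq> \<infinity> \<Longrightarrow> tdiff x y \<noteq> -\<infinity>"
  by (cases x; cases y) (auto simp: tdiff_def)

lemma tdiff_neq_PInfty: "x \<noteq> \<infinity> \<Longrightarrow> y \<noteq> -\<infinity> \<Longrightarrow> tdiff x y \<noteq> \<infinity>"
  by (cases x; cases y) (auto simp: tdiff_def)

lemma tropical_basis_iff_bij:
  assumes argmin: "\<And>j. j < d \<Longrightarrow> argmin_rows n (\<lambda>i. tdiff (bt i) (At i j)) = {r j}"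
  shows "tropical_basis n d At bt B \<longleftrightarrow> B \<subseteq> {..<d} \<and> bij_betw r B {..<n}"
proof (cases "B \<subseteq> {..<d}")
  case True
  have minimal_iff: "(\<forall>k<n. tdiff (bt i) (At i j) \<le> tdiff (bt k) (At k j)) \<longleftrightarrow> r j = i"
    if "i < n" "j < d" for i j
  proof -
    have "(\<forall>k<n. tdiff (bt i) (At i j) \<le> tdiff (bt k) (At k j))
        \<longleftrightarrow> i \<in> argmin_rows n (\<lambda>i. tdiff (bt i) (At i j))"
      using that(1) by (simp add: mem_argmin_rows)
    also have "\<dots> \<longleftrightarrow> r j = i" using argmin[OF that(2)] by auto
    finally show ?thesis .
  qed
  have "bij_betw \<phi> {..<n} B \<and> (\<forall>i<n. \<forall>k<n. tdiff (bt i) (At i (\<phi> i)) \<le> tdiff (bt k) (At k (\<phi> i)))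
      \<longleftrightarrow> bij_betw \<phi> {..<n} B \<and> (\<forall>i\<in>{..<n}. r (\<phi> i) = i)" for \<phi>
  proof -
    have "\<phi> i < d" if "bij_betw \<phi> {..<n} B" "i < n" for i
      using bij_betw_apply[OF that(1)] True that(2) by auto
    then show ?thesis using minimal_iff by auto
  qed
  then have "(\<exists>\<phi>. bij_betw \<phi> {..<n} B \<and>
      (\<forall>i<n. \<forall>k<n. tdiff (bt i) (At i (\<phi> i)) \<le> tdiff (bt k) (At k (\<phi> i))))
      \<longleftrightarrow> bij_betw r B {..<n}"
    unfolding bij_betw_iff_inverse_bij_betw[of r] by (rule ex_cong1)
  with True show ?thesis
    unfolding tropical_basis_def by (auto dest: bij_betw_same_card)
qed (simp add: tropical_basis_def)

lemma argmin_rows_singleton_strict: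
  fixes f :: "nat \<Rightarrow> ereal"
  assumes argmin: "argmin_rows n f = {r}"
    and finite_somewhere: "\<exists>k<n. f k \<noteq> \<infinity>" and not_MInfty: "\<forall>i<n. f i \<noteq> -\<infinity>"
  shows "r < n \<and> f r \<noteq> \<infinity> \<and> f r \<noteq> -\<infinity> \<and> (\<forall>k<n. k \<noteq> r \<longrightarrow> f r < f k)"
proof (intro conjI allI impI)
  have r: "r < n" "\<forall>k<n. f r \<le> f k" using argmin mem_argmin_rows[of r n f] by simp_all
  then show "r < n" and "f r \<noteq> -\<infinity>" using not_MInfty by simp_all
  obtain k where "k < n" "f k \<noteq> \<infinity>" using finite_somewhere by blast
  moreover have "f r \<le> f k" using r(2) \<open>k < n\<close> by simp
  ultimately show "f r \<noteq> \<infinity>" by auto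
  fix k assume k: "k < n" "k \<noteq> r"
  show "f r < f k"
  proof (rule ccontr)
    assume "\<not> f r < f k"
    then have "f k \<le> f r" by simp
    then have "\<forall>l<n. f k \<le> f l" using r(2) order_trans by blast
    then have "k \<in> argmin_rows n f" using k(1) by (simp add: mem_argmin_rows)
    with k(2) argmin show False by simp
  qed
qed

lemma tropical_nondegenerate_if_unique_argmin:
  assumes argmin: "\<And>j. j < d \<Longrightarrow> argmin_rows n (\<lambda>i. tdiff (bt i) (At i j)) = {r j}"
    and At_trop: "\<forall>i<n. \<forall>j<d. At i j \<noteq> \<infinity>" and bt_trop: "\<forall>i<n. bt i \<noteq> \<infinity>"
    and At_col: "\<forall>j<d. \<exists>i<n. At i j \<noteq> -\<infinity>" and bt_fin: "\<forall>i<n. bt i \<noteq> -\<infinity>"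
  shows "tropical_nondegenerate n d At bt"
  unfolding tropical_nondegenerate_def nondegenerate_tropical_basis_def
proof (intro allI impI conjI ballI)
  fix B j assume B: "tropical_basis n d At bt B" and "j \<in> B"
  then have j: "j < d" by (auto simp: tropical_basis_def)
  obtain k where "k < n" "At k j \<noteq> -\<infinity>" using At_col j by blast
  then have "\<exists>k<n. tdiff (bt k) (At k j) \<noteq> \<infinity>"
    using bt_trop tdiff_neq_PInfty by blast
  moreover have "\<forall>i<n. tdiff (bt i) (At i j) \<noteq> -\<infinity>"
    using j bt_fin At_trop by (intro allI impI tdiff_neq_MInfty) auto
  ultimately show "\<exists>i<n. tdiff (bt i) (At i j) \<noteq> \<infinity> \<and> tdiff (bt i) (At i j) \<noteq> -\<infinity> \<and>
      (\<forall>k<n. k \<noteq> i \<longrightarrow> tdiff (bt i) (At i j) < tdiff (bt k) (At k j))"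
    using argmin_rows_singleton_strict[OF argmin[OF j]] by blast
qed

section \<open>The normalized classical system\<close>

lemma classical_ratio_le_iff:
  assumes "0 < A i j" and "0 \<le> A k j" and "0 < b i" and "0 < b k"
  shows "classical_ratio A b i j \<le> classical_ratio A b k j \<longleftrightarrow> A k j / b k \<le> A i j / b i"
proof (cases "A k j = 0")
  case True
  then show ?thesis using assms by (simp add: classical_ratio_def)
next
  case False
  then have "0 < A k j" using assms(2) by simp
  then show ?thesis using assms False by (simp add: classical_ratio_def divide_simps ac_simps)
qed

locale dominant_system =
  fixes n d :: nat and A :: "nat \<Rightarrow> nat \<Rightarrow> real" and b :: "nat \<Rightarrow> real"
  assumes A_nonneg: "\<And>i j. i < n \<Longrightarrow> j < d \<Longrightarrow> 0 \<le> A i j"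
    and b_pos: "\<And>i. i < n \<Longrightarrow> 0 < b i"
    and A_col_nonzero: "\<And>j. j < d \<Longrightarrow> \<exists>i<n. A i j \<noteq> 0"
    and dominance: "dominance_condition n d A b"
begin

abbreviation u :: "nat \<Rightarrow> real" where "u \<equiv> col_scale n A b"

lemma col_scale_ge: "i < n \<Longrightarrow> A i j / b i \<le> u j"
  unfolding col_scale_def by (rule Max_ge) auto

lemma col_scale_le_iff:
  assumes "j < d"
  shows "u j \<le> x \<longleftrightarrow> (\<forall>k<n. A k j / b k \<le> x)"
proof -
  have "{A i j / b i | i. i < n} \<noteq> {}" using A_col_nonzero[OF assms] by blast
  then show ?thesis unfolding col_scale_def by (subst Max_le_iff) auto
qed

lemma col_scale_attained:
  assumes "j < d"
  obtains i where "i < n" and "u j = A i j / b i"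
proof -
  have "{A i j / b i | i. i < n} \<noteq> {}" using A_col_nonzero[OF assms] by blast
  then have "u j \<in> {A i j / b i | i. i < n}" unfolding col_scale_def by (intro Max_in) auto
  with that show ?thesis by blast
qed

lemma col_scale_pos:
  assumes "j < d"
  shows "0 < u j"
proof -
  obtain i where i: "i < n" "A i j \<noteq> 0" using A_col_nonzero[OF assms] by blast
  then have "0 < A i j / b i" using A_nonneg[OF i(1) assms] b_pos[OF i(1)] by simp
  also have "\<dots> \<le> u j" by (rule col_scale_ge[OF i(1)])
  finally show ?thesis .
qed

lemma ge_1_iff_col_scale_le:
  assumes "j < d"
  shows "1 \<le> normalized_matrix n A b i j \<longleftrightarrow> u j \<le> A i j / b i"
  unfolding normalized_matrix_def using col_scale_pos[OF assms] by (rule le_divide_eq_1_pos)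

sublocale dominant_matrix n d "normalized_matrix n A b"
proof
  fix i j assume i: "i < n" and j: "j < d"
  show "0 \<le> normalized_matrix n A b i j"
    unfolding normalized_matrix_def
    using A_nonneg[OF i j] b_pos[OF i] col_scale_pos[OF j] by simp
next
  fix j assume j: "j < d"
  obtain i where "i < n" "u j = A i j / b i" by (rule col_scale_attained[OF j])
  then show "\<exists>i<n. normalized_matrix n A b i j = 1"
    using col_scale_pos[OF j] by (auto simp: normalized_matrix_def)
next
  show "\<exists>S\<subseteq>{..<d}. covers_perm n (normalized_matrix n A b) S"
    using dominance unfolding dominance_condition_def Let_def by blast
  show "(\<Sum>j\<in>S. normalized_matrix n A b i j) < 2"
    if "S \<subseteq> {..<d}" "covers_perm n (normalized_matrix n A b) S" "i < n" for S i
    using dominance covers_perm_card[OF that(2)] that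
    unfolding dominance_condition_def Let_def by blast
qed

lemma argmin_ratio_iff:
  assumes i: "i < n" and j: "j < d"
  shows "i \<in> argmin_rows n (\<lambda>i. classical_ratio A b i j) \<longleftrightarrow> u j \<le> A i j / b i"
proof
  assume "i \<in> argmin_rows n (\<lambda>i. classical_ratio A b i j)"
  then have min: "\<forall>k<n. classical_ratio A b i j \<le> classical_ratio A b k j"
    by (simp add: mem_argmin_rows)
  have "A i j \<noteq> 0"
  proof
    assume "A i j = 0"
    obtain k where "k < n" "A k j \<noteq> 0" using A_col_nonzero[OF j] by blast
    with min \<open>A i j = 0\<close> show False by (auto simp: classical_ratio_def)
  qed
  then have pos: "0 < A i j" using A_nonneg[OF i j] by simp
  have "A k j / b k \<le> A i j / b i" if "k < n" for k
    using min that
      classical_ratio_le_iff[where A = A and b = b, OF pos A_nonneg[OF that j] b_pos[OF i] b_pos[OF that]]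
    by simp
  then show "u j \<le> A i j / b i" using col_scale_le_iff[OF j] by simp
next
  assume le: "u j \<le> A i j / b i"
  then have "0 < A i j / b i" using col_scale_pos[OF j] by simp
  then have pos: "0 < A i j" using b_pos[OF i] by (simp add: zero_less_divide_iff)
  have "classical_ratio A b i j \<le> classical_ratio A b k j" if "k < n" for k
    using classical_ratio_le_iff[where A = A and b = b, OF pos A_nonneg[OF that j] b_pos[OF i] b_pos[OF that]]
      col_scale_ge[OF that, of j] le
    by simp
  then show "i \<in> argmin_rows n (\<lambda>i. classical_ratio A b i j)"
    using i by (simp add: mem_argmin_rows)
qed

lemma argmin_ratio_eq_pivot_row:
  assumes j: "j < d"
  shows "argmin_rows n (\<lambda>i. classical_ratio A b i j) = {pivot_row j}"
proof -
  have "i \<in> argmin_rows n (\<lambda>i. classical_ratio A b i j) \<longleftrightarrow> i = pivot_row j" for i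
  proof (cases "i < n")
    case True
    then show ?thesis
      using argmin_ratio_iff[OF True j] ge_1_iff_col_scale_le[OF j] ge_1_iff_pivot_row[OF True j]
      by simp
  next
    case False
    then show ?thesis using pivot_row(1)[OF j] by (auto simp: mem_argmin_rows)
  qed
  then show ?thesis by blast
qed

lemma sum_eq_normalized_sum:
  assumes B: "B \<subseteq> {..<d}" and i: "i < n"
  shows "(\<Sum>j\<in>B. A i j * z j) = b i * (\<Sum>j\<in>B. normalized_matrix n A b i j * (u j * z j))"
proof -
  have "A i j * z j = b i * (normalized_matrix n A b i j * (u j * z j))" if "j \<in> B" for j
  proof -
    have "0 < u j" using col_scale_pos B that by blast
    then show ?thesis using b_pos[OF i] by (simp add: normalized_matrix_def)
  qed
  then have "(\<Sum>j\<in>B. A i j * z j) = (\<Sum>j\<in>B. b i * (normalized_matrix n A b i j * (u j * z j)))"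
    by (rule sum.cong[OF refl])
  then show ?thesis by (simp only: sum_distrib_left)
qed

lemma supported_solution_iff:
  assumes B: "B \<subseteq> {..<d}" and x: "\<forall>j. j \<notin> B \<longrightarrow> x j = 0" and i: "i < n"
  shows "(\<Sum>j<d. A i j * x j) = b i \<longleftrightarrow> (\<Sum>j\<in>B. normalized_matrix n A b i j * (u j * x j)) = 1"
  using sum_lessThan_eq_sum_support[OF B x] sum_eq_normalized_sum[OF B i] b_pos[OF i] by simp

lemma classical_basis_if_bij:
  assumes B: "B \<subseteq> {..<d}" and bij: "bij_betw pivot_row B {..<n}"
  shows "classical_basis n d A B"
proof -
  have fin: "finite B" using B finite_subset[OF _ finite_lessThan] by blast
  have card: "card B = n" using bij_betw_same_card[OF bij] by simp
  have kernel: "\<forall>j\<in>B. z j = 0"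
    if zero: "\<forall>i<n. (\<Sum>j\<in>B. A i j * z j) = 0" for z
  proof
    fix j assume "j \<in> B"
    have "\<forall>i<n. (\<Sum>j\<in>B. normalized_matrix n A b i j * (u j * z j)) = 0"
    proof (intro allI impI)
      fix i assume "i < n"
      then have "b i * (\<Sum>j\<in>B. normalized_matrix n A b i j * (u j * z j)) = 0"
        using zero sum_eq_normalized_sum[OF B] by simp
      with b_pos[OF \<open>i < n\<close>] show "(\<Sum>j\<in>B. normalized_matrix n A b i j * (u j * z j)) = 0"
        by simp
    qed
    then have "u j * z j = 0"
      using bij_pivot_row_kernel_trivial[OF B bij, where z = "\<lambda>j. u j * z j"] \<open>j \<in> B\<close> by simp
    moreover have "0 < u j" using col_scale_pos B \<open>j \<in> B\<close> by blast
    ultimately show "z j = 0" by simp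
  qed
  have "det (submat_cols n A B) \<noteq> 0"
    unfolding det_submat_cols_nonzero_iff[OF fin card]
  proof (intro allI impI)
    fix z assume "\<forall>i<n. (\<Sum>j\<in>B. A i j * z j) = 0"
    then show "\<forall>j\<in>B. z j = 0" by (rule kernel)
  qed
  then show ?thesis using B card by (simp add: classical_basis_def)
qed

lemma nondegenerate_feasible_if_bij:
  assumes B: "B \<subseteq> {..<d}" and bij: "bij_betw pivot_row B {..<n}"
  shows "nondegenerate_feasible_basis n d A b B"
proof -
  have basis: "classical_basis n d A B" by (rule classical_basis_if_bij[OF B bij])
  define x where "x = basic_solution n d A b B"
  have supp: "\<forall>j. j \<notin> B \<longrightarrow> x j = 0" and "\<forall>i<n. (\<Sum>j<d. A i j * x j) = b i"
    using basic_solution_spec[OF basis, where b = b] unfolding x_def by auto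
  then have solves: "\<forall>i<n. (\<Sum>j\<in>B. normalized_matrix n A b i j * (u j * x j)) = 1"
    using supported_solution_iff[OF B supp] by simp
  have pos: "0 < x j" if "j \<in> B" for j
  proof (rule zero_less_mult_pos)
    show "0 < u j * x j"
      using bij_pivot_row_solution_pos[OF B bij, where y = "\<lambda>j. u j * x j"] solves that by simp
    show "0 < u j" using col_scale_pos B that by blast
  qed
  have "x j \<noteq> 0 \<longleftrightarrow> j \<in> B" for j
    using pos[of j] supp by (cases "j \<in> B") auto
  then have "{j. x j \<noteq> 0} = B" by blast
  moreover have "0 \<le> x j" for j
    using pos[of j] supp by (cases "j \<in> B") auto
  ultimately show ?thesis
    using basis unfolding nondegenerate_feasible_basis_def feasible_basis_def x_def by simp
qed

lemma bij_if_feasible: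
  assumes "feasible_basis n d A b B"
  shows "B \<subseteq> {..<d}" and "bij_betw pivot_row B {..<n}"
proof -
  have basis: "classical_basis n d A B" and nonneg: "\<forall>j<d. 0 \<le> basic_solution n d A b B j"
    using assms by (auto simp: feasible_basis_def)
  then have B: "B \<subseteq> {..<d}" and card: "card B = n" by (auto simp: classical_basis_def)
  then show "B \<subseteq> {..<d}" by simp
  define x where "x = basic_solution n d A b B"
  have supp: "\<forall>j. j \<notin> B \<longrightarrow> x j = 0" and "\<forall>i<n. (\<Sum>j<d. A i j * x j) = b i"
    using basic_solution_spec[OF basis, where b = b] unfolding x_def by auto
  then have solves: "\<forall>i<n. (\<Sum>j\<in>B. normalized_matrix n A b i j * (u j * x j)) = 1"
    using supported_solution_iff[OF B supp] by simp
  have "\<forall>j\<in>B. 0 \<le> u j * x j"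
  proof
    fix j assume "j \<in> B"
    then have "j < d" using B by blast
    then have "0 < u j" and "0 \<le> x j" using col_scale_pos nonneg unfolding x_def by simp_all
    then show "0 \<le> u j * x j" by simp
  qed
  from this solves show "bij_betw pivot_row B {..<n}"
    by (rule bij_pivot_row_if_nonneg_solution[OF B card])
qed

lemma feasible_basis_iff_bij:
  "feasible_basis n d A b B \<longleftrightarrow> B \<subseteq> {..<d} \<and> bij_betw pivot_row B {..<n}"
proof
  assume "feasible_basis n d A b B"
  then show "B \<subseteq> {..<d} \<and> bij_betw pivot_row B {..<n}" using bij_if_feasible by simp
next
  assume "B \<subseteq> {..<d} \<and> bij_betw pivot_row B {..<n}"
  then show "feasible_basis n d A b B"
    using nondegenerate_feasible_if_bij unfolding nondegenerate_feasible_basis_def by simp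
qed

lemma classical_nondegenerate: "classical_nondegenerate n d A b"
  unfolding classical_nondegenerate_def
proof (intro allI impI)
  fix B assume "feasible_basis n d A b B"
  then show "nondegenerate_feasible_basis n d A b B"
    using bij_if_feasible nondegenerate_feasible_if_bij by simp
qed

end

theorem proposition4p4:
  fixes n d :: nat
    and A :: "nat \<Rightarrow> nat \<Rightarrow> real" and b :: "nat \<Rightarrow> real"
    and At :: "nat \<Rightarrow> nat \<Rightarrow> ereal" and bt :: "nat \<Rightarrow> ereal"
  assumes A_nonneg: "\<forall>i<n. \<forall>j<d. A i j \<ge> 0"
    and b_nonneg: "\<forall>i<n. b i \<ge> 0"
    and A_col_nonzero: "\<forall>j<d. \<exists>i<n. A i j \<noteq> 0"
    and b_nonzero: "\<forall>i<n. b i \<noteq> 0"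
    and dom: "dominance_condition n d A b"
    and At_trop: "\<forall>i<n. \<forall>j<d. At i j \<noteq> \<infinity>"
    and bt_trop: "\<forall>i<n. bt i \<noteq> \<infinity>"
    and At_col: "\<forall>j<d. \<exists>i<n. At i j \<noteq> -\<infinity>"
    and bt_fin: "\<forall>i<n. bt i \<noteq> -\<infinity>"
    and same_argmin: "\<forall>j<d. argmin_rows n (\<lambda>i. classical_ratio A b i j)
                            = argmin_rows n (\<lambda>i. tdiff (bt i) (At i j))"
  shows "{B. feasible_basis n d A b B} = {B. tropical_basis n d At bt B}
         \<and> classical_nondegenerate n d A b
         \<and> tropical_nondegenerate n d At bt"
proof -
  interpret dominant_system n d A b
    using A_nonneg b_nonneg b_nonzero A_col_nonzero dom by unfold_locales (auto simp: order_less_le)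
  have argmin: "argmin_rows n (\<lambda>i. tdiff (bt i) (At i j)) = {pivot_row j}" if "j < d" for j
    using same_argmin argmin_ratio_eq_pivot_row[OF that] that by simp
  have "{B. feasible_basis n d A b B} = {B. tropical_basis n d At bt B}"
    by (simp add: feasible_basis_iff_bij tropical_basis_iff_bij[OF argmin])
  with classical_nondegenerate
    tropical_nondegenerate_if_unique_argmin[OF argmin At_trop bt_trop At_col bt_fin]
  show ?thesis by simp
qed

end
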